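(* Let $|p|<1$, let $n\ge0$ be an integer, and let $a,b,c,d,e,f,q,r,s,t,u,v,w$ be nonzero complex numbers with $a^3v^n=bcdef$ and $w^3=qrstuv$, such that all expressions below are well defined. Then \begin{align*} &\sum_{k=0}^n\frac{\theta\big(aw^k,\,a(w/tu)^k/(ef),\,a^2(uv/w)^k/(bcde),\,a^2(tv/w)^k/(bcdf),\,a^2/(bcd);p\big)}{\theta\big(a,\,a/(ef),\,a^2/(bcde),\,a^2/(bcdf),\,a^2(tuv/w)^k/(bcd);p\big)}\\ &\quad\times\frac{(b;q,p)_k(c;r,p)_k(d;s,p)_k(e;t,p)_k(f;u,p)_k(v^{-n};v,p)_k}{(a/b;w/q,p)_k(a/c;w/r,p)_k(a/d;w/s,p)_k(aw/(et);w/t,p)_k(aw/(fu);w/u,p)_k(awv^{n-1};w/v,p)_k}\,(w/v)^k\\ &\quad\times\Bigg[1-\frac{\theta\big(a(w/rs)^k/(cd),a(w/qs)^k/(bd),a(w/qr)^k/(bc);p\big)}{\theta\big(a(w/q)^k/b,a(w/r)^k/c,a(w/s)^k/d;p\big)}\cdot\frac{\theta\big(et^k,fu^k,v^{k-n};p\big)}{\theta\big(f(u/w)^kv^{k-n}/a,\,e(t/w)^kv^{k-n}/a,\,ef(tu/w)^k/a;p\big)}\Bigg]\\ &=\frac{\theta\big(a/e,\,a/f,\,v^{-n}/a,\,efv^{-n}/a;p\big)}{\theta\big(ev^{-n}/a,\,fv^{-n}/a,\,a,\,a/(ef);p\big)}. \end{align*}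
   Context: For $|p|<1$ and $x\neq 0$, $\theta(x;p)=(x;p)_\infty(p/x;p)_\infty$ where $(x;p)_\infty=\prod_{k\ge 0}(1-xp^k)$, and $\theta(x_1,\dots,x_m;p)=\prod_{i=1}^m\theta(x_i;p)$. For $a\ne0$ and integer $k\ge0$, $(a;q,p)_k=\prod_{j=0}^{k-1}\theta(aq^j;p)$ (empty product $=1$). Here e.g. $(w/tu)^k$ means $(w/(tu))^k$. *)

theory Defs
  imports "HOL-Analysis.Analysis"
begin

definition qpinf :: "complex \<Rightarrow> complex \<Rightarrow> complex" where
  "qpinf x p = prodinf (\<lambda>k. 1 - x * p ^ k)"

definition theta :: "complex \<Rightarrow> complex \<Rightarrow> complex" where
  "theta x p = qpinf x p * qpinf (p / x) p"

definition epoch :: "complex \<Rightarrow> complex \<Rightarrow> complex \<Rightarrow> nat \<Rightarrow> complex" where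
  "epoch a q p k = (\<Prod>j<k. theta (a * q ^ j) p)"

end

theory Submission
  imports Defs "HOL-Complex_Analysis.Complex_Analysis"
begin

(* The sum telescopes. With A_k = a w^k, B_k = b q^k, C_k = c r^k, D_k = d s^k, E_k = e t^k,
   F_k = f u^k and N_k = v^(k-n), which satisfy A_k^3 = B_k C_k D_k E_k F_k N_k, the k-th summand
   equals U_k - U_(k+1) for
     U_k = (prefactor) (ratio of elliptic shifted factorials at k) (w/v)^k
           theta(A_k/E_k) theta(A_k/F_k) theta(N_k/A_k),
   and U_(n+1) = 0 because its shifted factorial (v^-n; v, p)_(n+1) contains theta(1) = 0.
   The difference identity is a rational consequence of two instances of the four-term identity
     theta(b) theta(c) theta(d) theta(a^2/(bcd))
       = theta(a/b) theta(a/c) theta(a/d) theta(bcd/a)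
         + (bcd/a) theta(a) theta(a/(cd)) theta(a/(bd)) theta(a/(bc)),
   a specialisation of Weierstrass' addition formula for theta. The addition formula is proved
   classically: in x, both sides are holomorphic on the punctured plane with the same multiplier
   under x -> p x, and their difference vanishes at the simple zeros of theta(xu) theta(x/u); the
   quotient is therefore a holomorphic p-invariant function, bounded by compactness of an annulus and
   constant by Liouville. The genericity needed for simple zeros is removed by continuity in u. *)

section \<open>The q-Pochhammer symbol and the theta function\<close>

lemma convergent_prod_qpinf:
  fixes x p :: complex
  assumes "norm p < 1"
  shows "convergent_prod (\<lambda>k. 1 - x * p ^ k)"
proof -
  have "summable (\<lambda>k. norm x * norm p ^ k)"
    using assms by (intro summable_mult summable_geometric) auto
  then have "summable (\<lambda>k. norm ((1 - x * p ^ k) - 1))"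
    by (simp add: norm_mult norm_power)
  then show ?thesis
    by (intro abs_convergent_prod_imp_convergent_prod summable_imp_abs_convergent_prod)
qed

lemma has_prod_qpinf:
  "norm p < 1 \<Longrightarrow> (\<lambda>k. 1 - x * p ^ k) has_prod qpinf x p"
  unfolding qpinf_def by (rule convergent_prod_has_prod[OF convergent_prod_qpinf])

lemma qpinf_rec:
  assumes "norm p < 1"
  shows "qpinf x p = (1 - x) * qpinf (x * p) p"
proof -
  have "(\<lambda>k. 1 - x * p ^ Suc k) has_prod qpinf (x * p) p"
    using has_prod_qpinf[OF assms, of "x * p"] by (simp add: ac_simps)
  then have "(\<lambda>k. 1 - x * p ^ k) has_prod (qpinf (x * p) p * (1 - x * p ^ 0))"
    by (rule has_prod_Suc_imp)
  then show ?thesis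
    using has_prod_unique2[OF has_prod_qpinf[OF assms]] by (simp add: mult.commute)
qed

lemma qpinf_eq_0_iff:
  assumes "norm p < 1"
  shows "qpinf x p = 0 \<longleftrightarrow> (\<exists>k. x * p ^ k = 1)"
  using has_prod_eq_0_iff[OF has_prod_qpinf[OF assms]]
  by (metis (no_types, lifting) eq_iff_diff_eq_0 rangeE range_eqI)

lemma qpinf_self_nonzero:
  assumes "norm p < 1"
  shows "qpinf p p \<noteq> 0"
proof
  assume "qpinf p p = 0"
  then obtain k where "p ^ Suc k = 1"
    using qpinf_eq_0_iff[OF assms] by auto
  then have "norm p ^ Suc k = 1"
    by (metis norm_one norm_power)
  moreover have "norm p ^ Suc k < 1"
    using assms power_decreasing[of 1 "Suc k" "norm p"] by simp
  ultimately show False by simp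
qed

lemma holomorphic_qpinf [holomorphic_intros]:
  assumes "norm p < 1" "f holomorphic_on A"
  shows "(\<lambda>x. qpinf (f x) p) holomorphic_on A"
proof -
  have "(\<lambda>x. qpinf x p) holomorphic_on UNIV"
  proof (rule holomorphic_uniform_sequence[where f = "\<lambda>n x. \<Prod>k<n. 1 - x * p ^ k"])
    fix z :: complex
    define R where "R = norm z + 1"
    have "uniformly_convergent_on (cball 0 R) (\<lambda>n x. \<Sum>k<n. norm ((1 - x * p ^ k) - 1))"
    proof (rule Weierstrass_m_test'[where M = "\<lambda>k. R * norm p ^ k"])
      show "norm (norm ((1 - x * p ^ k) - 1)) \<le> R * norm p ^ k" if "x \<in> cball 0 R" for k x
        using that by (simp add: norm_mult norm_power mult_right_mono)
      show "summable (\<lambda>k. R * norm p ^ k)"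
        using assms by (intro summable_mult summable_geometric) auto
    qed
    then have "uniformly_convergent_on (cball 0 R) (\<lambda>n x. \<Prod>k<n. 1 - x * p ^ k)"
      by (intro uniformly_convergent_on_prod') (auto intro!: continuous_intros)
    then have "uniform_limit (cball 0 R) (\<lambda>n x. \<Prod>k<n. 1 - x * p ^ k)
        (\<lambda>x. lim (\<lambda>n. \<Prod>k<n. 1 - x * p ^ k)) sequentially"
      by (simp add: uniformly_convergent_uniform_limit_iff)
    moreover have "lim (\<lambda>n. \<Prod>k<n. 1 - x * p ^ k) = qpinf x p" for x
      using has_prod_imp_tendsto'[OF has_prod_qpinf[OF assms(1)]] by (rule limI)
    moreover have "cball z 1 \<subseteq> cball 0 R"
      unfolding R_def by (simp add: cball_subset_cball_iff)
    ultimately show "\<exists>d>0. cball z d \<subseteq> UNIV \<and>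
        uniform_limit (cball z d) (\<lambda>n x. \<Prod>k<n. 1 - x * p ^ k) (\<lambda>x. qpinf x p) sequentially"
      by (intro exI[of _ 1]) (auto intro: uniform_limit_on_subset)
  qed (auto intro!: holomorphic_intros)
  from holomorphic_on_compose[OF assms(2) holomorphic_on_subset[OF this]] show ?thesis
    by (simp add: o_def)
qed

lemma holomorphic_theta [holomorphic_intros]:
  assumes "norm p < 1" "f holomorphic_on A" "\<And>x. x \<in> A \<Longrightarrow> f x \<noteq> 0"
  shows "(\<lambda>x. theta (f x) p) holomorphic_on A"
  unfolding theta_def using assms by (intro holomorphic_intros) auto

lemma has_field_derivative_theta:
  assumes "norm p < 1" "z \<noteq> 0"
  shows "((\<lambda>x. theta x p) has_field_derivative deriv (\<lambda>x. theta x p) z) (at z)"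
  using assms by (intro holomorphic_derivI[where S = "- {0}"] holomorphic_intros) auto

lemma qpinf_0_left: "qpinf 0 p = 1"
  by (simp add: qpinf_def)

lemma theta_0_right: "theta x 0 = 1 - x"
  using qpinf_rec[of 0 x] by (simp add: theta_def qpinf_0_left)

lemma theta_rec:
  assumes "norm p < 1"
  shows "theta x p = (1 - x) * qpinf (x * p) p * qpinf (p / x) p"
  unfolding theta_def by (simp add: qpinf_rec[OF assms, of x])

lemma theta_1: "norm p < 1 \<Longrightarrow> theta 1 p = 0"
  by (simp add: theta_rec)

lemma theta_inverse:
  assumes "norm p < 1" "x \<noteq> 0"
  shows "theta (1 / x) p = - theta x p / x"
proof -
  have "theta (1 / x) p = (1 - 1 / x) * qpinf (p / x) p * qpinf (x * p) p"
    by (simp add: theta_rec[OF assms(1)] field_simps)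
  also have "1 - 1 / x = - (1 - x) / x"
    using assms(2) by (simp add: field_simps)
  finally show ?thesis
    using assms(2) by (simp add: theta_rec[OF assms(1), of x] field_simps)
qed

lemma theta_divide_swap:
  assumes "norm p < 1" "x \<noteq> 0" "y \<noteq> 0"
  shows "theta (x / y) p = - (x / y) * theta (y / x) p"
  using theta_inverse[OF assms(1), of "y / x"] assms by simp

lemma theta_mult_p:
  assumes "norm p < 1" "p \<noteq> 0" "x \<noteq> 0"
  shows "theta (p * x) p = - theta x p / x"
  using theta_inverse[OF assms(1,3)] assms(2,3) by (simp add: theta_def field_simps)

lemma theta_eq_0_iff:
  assumes "norm p < 1" "p \<noteq> 0" "x \<noteq> 0"
  shows "theta x p = 0 \<longleftrightarrow> (\<exists>k::int. x = p powi k)"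
proof -
  have "theta x p = 0 \<longleftrightarrow> (\<exists>k. x * p ^ k = 1) \<or> (\<exists>k. p / x * p ^ k = 1)"
    by (simp add: theta_def qpinf_eq_0_iff[OF assms(1)])
  also have "(\<exists>k. x * p ^ k = 1) \<longleftrightarrow> (\<exists>k::nat. x = p powi - int k)"
    using assms(2) by (simp add: power_int_minus field_simps)
  also have "(\<exists>k. p / x * p ^ k = 1) \<longleftrightarrow> (\<exists>k::nat. x = p ^ Suc k)"
    using assms(3) by (auto simp: field_simps)
  also have "(\<exists>k::nat. x = p powi - int k) \<or> (\<exists>k::nat. x = p ^ Suc k)
      \<longleftrightarrow> (\<exists>k::int. x = p powi k)"
  proof
    assume "\<exists>k::int. x = p powi k"
    then obtain k :: int where k: "x = p powi k" ..
    show "(\<exists>k::nat. x = p powi - int k) \<or> (\<exists>k::nat. x = p ^ Suc k)"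
    proof (cases "k \<le> 0")
      case True
      then have "k = - int (nat (- k))" by simp
      then show ?thesis using k by metis
    next
      case False
      then have "k = int (Suc (nat (k - 1)))" by simp
      then show ?thesis using k by (metis power_int_of_nat)
    qed
  qed (metis power_int_of_nat)
  finally show ?thesis .
qed

lemma deriv_theta_1:
  assumes "norm p < 1"
  shows "deriv (\<lambda>x. theta x p) 1 = - (qpinf p p)\<^sup>2"
proof -
  define R where "R x = qpinf (x * p) p * qpinf (p / x) p" for x
  have "R holomorphic_on - {0}"
    unfolding R_def using assms by (intro holomorphic_intros) auto
  then have "(R has_field_derivative deriv R 1) (at 1)"
    by (intro holomorphic_derivI[where S = "- {0}"]) auto
  then have "((\<lambda>x. (1 - x) * R x) has_field_derivative - R 1) (at 1)"
    by (auto intro!: derivative_eq_intros)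
  moreover have "(\<lambda>x. theta x p) = (\<lambda>x. (1 - x) * R x)"
    by (simp add: R_def theta_rec[OF assms] mult.assoc)
  ultimately show ?thesis
    by (simp add: DERIV_imp_deriv R_def power2_eq_square)
qed

lemma deriv_theta_mult_p:
  assumes "norm p < 1" "p \<noteq> 0" "x \<noteq> 0" "theta x p = 0"
  shows "deriv (\<lambda>x. theta x p) (p * x) = - deriv (\<lambda>x. theta x p) x / (p * x)"
proof -
  let ?T = "\<lambda>x. theta x p" and ?T' = "deriv (\<lambda>x. theta x p)"
  have "(?T has_field_derivative ?T' (p * x)) (at (p * x))"
    using has_field_derivative_theta assms by simp
  moreover have "((\<lambda>z. p * z) has_field_derivative p) (at x)"
    by (auto intro!: derivative_eq_intros)
  ultimately have "((\<lambda>z. ?T (p * z)) has_field_derivative ?T' (p * x) * p) (at x)"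
    by (rule DERIV_chain2)
  moreover have "((\<lambda>z. - ?T z / z) has_field_derivative - ?T' x / x) (at x)"
    using has_field_derivative_theta[OF assms(1,3)] assms(3,4)
    by (auto intro!: derivative_eq_intros simp: field_simps power2_eq_square)
  then have "((\<lambda>z. ?T (p * z)) has_field_derivative - ?T' x / x) (at x)"
    by (rule has_field_derivative_transform_within_open[where S = "- {0}"])
      (use assms in \<open>auto simp: theta_mult_p\<close>)
  ultimately have "?T' (p * x) * p = - ?T' x / x"
    by (rule DERIV_unique)
  then show ?thesis
    using assms(2,3) by (simp add: field_simps)
qed

lemma deriv_theta_nonzero:
  assumes "norm p < 1" "p \<noteq> 0" "x \<noteq> 0" "theta x p = 0"
  shows "deriv (\<lambda>x. theta x p) x \<noteq> 0"
proof -
  let ?T' = "deriv (\<lambda>x. theta x p)"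
  have zero: "theta (p powi k) p = 0" for k
    using theta_eq_0_iff[OF assms(1,2)] assms(2) by auto
  have "?T' (p powi k) \<noteq> 0" for k
  proof (induction k rule: int_induct[where k = 0])
    case base
    show ?case
      using deriv_theta_1[OF assms(1)] qpinf_self_nonzero[OF assms(1)] by simp
  next
    case (step1 i)
    then show ?case
      using deriv_theta_mult_p[OF assms(1,2) _ zero, of i] assms(2)
      by (simp add: power_int_add_1')
  next
    case (step2 i)
    have "p powi i = p * p powi (i - 1)"
      using assms(2) by (simp add: power_int_diff)
    then show ?case
      using step2 deriv_theta_mult_p[OF assms(1,2) _ zero, of "i - 1"] assms(2) by auto
  qed
  then show ?thesis
    using theta_eq_0_iff[OF assms(1-3)] assms(4) by auto
qed

section \<open>Quasi-periodic functions on the punctured plane\<close>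

lemma quasi_periodic_zero_power_int:
  fixes F m :: "complex \<Rightarrow> complex"
  assumes p: "p \<noteq> 0"
    and shift: "\<And>x. x \<noteq> 0 \<Longrightarrow> F (p * x) = m x * F x"
    and m: "\<And>x. x \<noteq> 0 \<Longrightarrow> m x \<noteq> 0"
    and w: "w \<noteq> 0" "F w = 0"
  shows "F (p powi k * w) = 0"
proof (induction k rule: int_induct[where k = 0])
  case base
  show ?case using w by simp
next
  case (step1 i)
  then show ?case
    using shift[of "p powi i * w"] p w by (simp add: power_int_add_1' mult.assoc)
next
  case (step2 i)
  have "p powi i * w = p * (p powi (i - 1) * w)"
    using p by (simp add: power_int_diff)
  then show ?case
    using step2 shift[of "p powi (i - 1) * w"] m[of "p powi (i - 1) * w"] p w
    by (simp add: mult.assoc)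
qed

lemma exists_power_int_in_annulus:
  fixes a r :: real
  assumes a: "0 < a" "a < 1" and r: "0 < r"
  obtains k :: int where "a \<le> a powi k * r" "a powi k * r \<le> 1"
proof -
  define k where "k = \<lceil>ln r / - ln a\<rceil>"
  have L: "ln a < 0"
    using a by simp
  have "ln r / - ln a \<le> k" "k < ln r / - ln a + 1"
    unfolding k_def by linarith+
  then have "ln a \<le> k * ln a + ln r" "k * ln a + ln r \<le> 0"
    using L by (simp_all add: field_simps)
  then have "exp (ln a) \<le> exp (k * ln a + ln r)" "exp (k * ln a + ln r) \<le> exp 0"
    by simp_all
  moreover have "exp (k * ln a + ln r) = a powi k * r"
    using a r by (simp add: exp_add exp_power_int[symmetric])
  ultimately show ?thesis
    using a by (intro that[of k]) simp_all
qed

lemma bounded_if_dilation_invariant: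
  fixes G :: "complex \<Rightarrow> complex"
  assumes p: "0 < norm p" "norm p < 1"
    and G: "continuous_on (- {0}) G" "\<And>z. z \<noteq> 0 \<Longrightarrow> G (p * z) = G z"
  shows "bounded (G ` (- {0}))"
proof -
  define K where "K = cball 0 1 - ball (0::complex) (norm p)"
  have "K \<subseteq> - {0}"
    unfolding K_def using p by auto
  moreover have "compact K"
    unfolding K_def by (intro compact_diff) auto
  ultimately have "bounded (G ` K)"
    by (intro compact_imp_bounded compact_continuous_image continuous_on_subset[OF G(1)])
  moreover have "G ` (- {0}) \<subseteq> G ` K"
  proof
    fix z assume "z \<in> G ` (- {0})"
    then obtain w where w: "w \<noteq> 0" "z = G w" by auto
    have "0 < norm w"
      using w by simp
    then obtain k where k: "norm p \<le> norm p powi k * norm w" "norm p powi k * norm w \<le> 1"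
      by (rule exists_power_int_in_annulus[OF p])
    have "p powi k * w \<in> K"
      using k by (simp add: K_def norm_mult norm_power_int)
    moreover have "G (p powi k * w) - G w = 0"
      using quasi_periodic_zero_power_int[of p "\<lambda>x. G x - G w" "\<lambda>_. 1"] G(2) p w by simp
    ultimately show "z \<in> G ` K"
      using w by (metis eq_iff_diff_eq_0 image_eqI)
  qed
  ultimately show ?thesis
    by (rule bounded_subset)
qed

lemma constant_if_bounded_holomorphic_punctured:
  fixes G :: "complex \<Rightarrow> complex"
  assumes "G holomorphic_on - {0}" "bounded (G ` (- {0}))"
  obtains c where "\<And>z. z \<noteq> 0 \<Longrightarrow> G z = c"
proof -
  have "(G \<circ> exp) holomorphic_on UNIV"
    by (rule holomorphic_on_compose_gen[OF _ assms(1)]) (auto intro: holomorphic_intros)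
  moreover have "bounded (range (G \<circ> exp))"
    by (rule bounded_subset[OF assms(2)]) auto
  ultimately obtain c where "\<And>z. G (exp z) = c"
    using Liouville_theorem unfolding constant_on_def by fastforce
  then show ?thesis
    by (metis exp_Ln that)
qed

lemma remove_sings_divide_analytic_at_simple_zero:
  fixes F D :: "complex \<Rightarrow> complex"
  assumes "F analytic_on {z}" "D analytic_on {z}" "F z = 0" "D z = 0" "deriv D z \<noteq> 0"
  shows "remove_sings (\<lambda>w. F w / D w) analytic_on {z}"
proof (rule remove_sings_analytic_at)
  show "isolated_singularity_at (\<lambda>w. F w / D w) z"
    using assms by (intro isolated_singularity_at_divide isolated_singularity_at_analytic
        not_essential_analytic)
  have "((\<lambda>w. (F w - F z) / (w - z)) \<longlongrightarrow> deriv F z) (at z)"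
       "((\<lambda>w. (D w - D z) / (w - z)) \<longlongrightarrow> deriv D z) (at z)"
    using analytic_derivI[OF assms(1)] analytic_derivI[OF assms(2)]
    by (simp_all add: has_field_derivative_iff)
  then have "((\<lambda>w. ((F w - F z) / (w - z)) / ((D w - D z) / (w - z)))
      \<longlongrightarrow> deriv F z / deriv D z) (at z)"
    using assms(5) by (rule tendsto_divide)
  moreover have "eventually (\<lambda>w. ((F w - F z) / (w - z)) / ((D w - D z) / (w - z)) = F w / D w) (at z)"
    using eventually_neq_at_within[of z z] by eventually_elim (simp add: assms(3,4))
  ultimately show "((\<lambda>w. F w / D w) \<longlongrightarrow> deriv F z / deriv D z) (at z)"
    by (rule Lim_transform_eventually)
qed

lemma proportional_if_same_quasi_periodicity:
  fixes F D m :: "complex \<Rightarrow> complex"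
  assumes p: "norm p < 1" "p \<noteq> 0"
    and holo: "F holomorphic_on - {0}" "D holomorphic_on - {0}"
    and shift: "\<And>x. x \<noteq> 0 \<Longrightarrow> F (p * x) = m x * F x"
      "\<And>x. x \<noteq> 0 \<Longrightarrow> D (p * x) = m x * D x"
    and m: "\<And>x. x \<noteq> 0 \<Longrightarrow> m x \<noteq> 0"
    and zeros: "\<And>x. x \<noteq> 0 \<Longrightarrow> D x = 0 \<Longrightarrow> F x = 0 \<and> deriv D x \<noteq> 0"
  obtains c where "\<And>x. x \<noteq> 0 \<Longrightarrow> F x = c * D x"
proof -
  define H where "H x = F x / D x" for x
  define G where "G = remove_sings H"
  have analytic: "F analytic_on {z}" "D analytic_on {z}" if "z \<noteq> 0" for z
    using holomorphic_on_imp_analytic_at[OF holo(1)] holomorphic_on_imp_analytic_at[OF holo(2)] that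
    by auto
  have G_analytic: "G analytic_on {z}" if "z \<noteq> 0" for z
  proof (cases "D z = 0")
    case True
    then show ?thesis
      unfolding G_def H_def using zeros[OF that True] analytic[OF that]
      by (intro remove_sings_divide_analytic_at_simple_zero) auto
  next
    case False
    then show ?thesis
      unfolding G_def H_def using analytic[OF that]
      by (intro remove_sings_analytic_on analytic_on_divide) auto
  qed
  then have G_holo: "G holomorphic_on - {0}"
    using analytic_imp_holomorphic analytic_on_analytic_at by blast
  have "G (p * z) = G z" if z: "z \<noteq> 0" for z
  proof -
    have "filtermap ((*) p) (at z) = at (p * z)"
      by (rule filtermap_nhds_eq_imp_filtermap_at_eq[OF filtermap_nhds_times[OF p(2)]])
        (use p(2) in simp)
    then have "G (p * z) = remove_sings (H \<circ> (*) p) z"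
      unfolding G_def by (rule remove_sings_compose[symmetric])
    also have "\<dots> = G z"
    proof -
      have "eventually (\<lambda>x. (H \<circ> (*) p) x = H x) (at z)"
        using eventually_neq_at_within[of 0 z UNIV] by eventually_elim (simp add: H_def shift m)
      then show ?thesis
        unfolding G_def by (rule remove_sings_cong) simp
    qed
    finally show ?thesis .
  qed
  then have "bounded (G ` (- {0}))"
    using p by (intro bounded_if_dilation_invariant holomorphic_on_imp_continuous_on[OF G_holo]) auto
  then obtain c where c: "\<And>z. z \<noteq> 0 \<Longrightarrow> G z = c"
    using constant_if_bounded_holomorphic_punctured[OF G_holo] by blast
  show ?thesis
  proof (rule that)
    fix x :: complex assume x: "x \<noteq> 0"
    show "F x = c * D x"
    proof (cases "D x = 0")
      case True
      then show ?thesis using zeros[OF x] by simp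
    next
      case False
      then have "G x = F x / D x"
        unfolding G_def H_def using analytic[OF x] by (intro remove_sings_at_analytic analytic_on_divide) auto
      then show ?thesis
        using c[OF x] False by (simp add: field_simps)
    qed
  qed
qed

section \<open>Weierstrass' addition formula\<close>

lemma theta_pair_mult_p:
  assumes "norm p < 1" "p \<noteq> 0" "x \<noteq> 0" "c \<noteq> 0"
  shows "theta (p * x * c) p * theta (p * x / c) p = theta (x * c) p * theta (x / c) p / x\<^sup>2"
proof -
  have "theta (p * x * c) p * theta (p * x / c) p
      = (- theta (x * c) p / (x * c)) * (- theta (x / c) p / (x / c))"
    using theta_mult_p[OF assms(1,2), of "x * c"] theta_mult_p[OF assms(1,2), of "x / c"] assms(3,4)
    by (simp add: mult.assoc)
  also have "\<dots> = theta (x * c) p * theta (x / c) p / x\<^sup>2"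
    using assms(3,4) by (simp add: field_simps power2_eq_square)
  finally show ?thesis .
qed

lemma theta_pair_inverse:
  assumes "norm p < 1" "x \<noteq> 0" "c \<noteq> 0"
  shows "theta (c / x) p * theta (1 / (x * c)) p = theta (x * c) p * theta (x / c) p / x\<^sup>2"
proof -
  have xc: "x * c \<noteq> 0"
    using assms(2,3) by simp
  have "theta (c / x) p * theta (1 / (x * c)) p
      = (- (c / x) * theta (x / c) p) * (- theta (x * c) p / (x * c))"
    by (simp only: theta_divide_swap[OF assms(1,3,2)] theta_inverse[OF assms(1) xc])
  also have "\<dots> = theta (x * c) p * theta (x / c) p / x\<^sup>2"
    using assms(2,3) by (simp add: field_simps power2_eq_square)
  finally show ?thesis .
qed

lemma theta_addition_generic:
  fixes p x y u v :: complex
  assumes p: "norm p < 1" "p \<noteq> 0"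
    and nz: "x \<noteq> 0" "y \<noteq> 0" "u \<noteq> 0" "v \<noteq> 0"
    and generic: "theta (u * u) p \<noteq> 0" "theta (y * u) p \<noteq> 0" "theta (y / u) p \<noteq> 0"
  shows "theta (x * y) p * theta (x / y) p * theta (u * v) p * theta (u / v) p
       - theta (x * v) p * theta (x / v) p * theta (u * y) p * theta (u / y) p
       = (u / y) * theta (y * v) p * theta (y / v) p * theta (x * u) p * theta (x / u) p"
proof -
  let ?T = "\<lambda>z. theta z p" and ?T' = "deriv (\<lambda>z. theta z p)"
  define P where "P c z = ?T (z * c) * ?T (z / c)" for c z
  define F where "F z = P y z * P v u - P v z * P y u - (u / y) * P v y * P u z" for z
  define D where "D = P u"
  have shift_P: "P c (p * z) = 1 / z\<^sup>2 * P c z" if "z \<noteq> 0" "c \<noteq> 0" for c z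
    using theta_pair_mult_p[OF p that] unfolding P_def by simp
  have shift_F: "F (p * z) = 1 / z\<^sup>2 * F z" if "z \<noteq> 0" for z
    using that nz by (simp add: F_def shift_P algebra_simps)
  have shift_D: "D (p * z) = 1 / z\<^sup>2 * D z" if "z \<noteq> 0" for z
    using that nz by (simp add: D_def shift_P)
  have F_u: "F u = 0"
    using nz theta_1[OF p(1)] by (simp add: F_def P_def)
  have F_inv_u: "F (1 / u) = 0"
    using theta_pair_inverse[OF p(1) nz(3)] nz theta_1[OF p(1)] by (simp add: F_def P_def)
  have F_y: "F y = 0"
    using nz theta_1[OF p(1)] theta_divide_swap[OF p(1) nz(2,3)]
    by (simp add: F_def P_def mult.commute)
  have deriv_D: "deriv D z = u * ?T' (z * u) * ?T (z / u) + ?T (z * u) * ?T' (z / u) / u"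
    if "z \<noteq> 0" for z
  proof -
    have dT: "(?T has_field_derivative ?T' (z * u)) (at (z * u))"
      "(?T has_field_derivative ?T' (z / u)) (at (z / u))"
      using has_field_derivative_theta[OF p(1)] that nz by simp_all
    have "((\<lambda>w. ?T (w * u)) has_field_derivative ?T' (z * u) * u) (at z)"
      by (rule DERIV_chain2[where g = "\<lambda>w. w * u", OF dT(1)]) (auto intro!: derivative_eq_intros)
    moreover have "((\<lambda>w. ?T (w / u)) has_field_derivative ?T' (z / u) * (1 / u)) (at z)"
      by (rule DERIV_chain2[where g = "\<lambda>w. w / u", OF dT(2)])
        (use nz in \<open>auto intro!: derivative_eq_intros\<close>)
    ultimately have "(D has_field_derivative
        ?T' (z * u) * u * ?T (z / u) + ?T' (z / u) * (1 / u) * ?T (z * u)) (at z)"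
      unfolding D_def P_def by (rule DERIV_mult)
    then show ?thesis
      by (simp add: DERIV_imp_deriv field_simps)
  qed
  have zeros: "F z = 0 \<and> deriv D z \<noteq> 0" if z: "z \<noteq> 0" "D z = 0" for z
  proof -
    have not_both: "\<not> (?T (z * u) = 0 \<and> ?T (z / u) = 0)"
    proof
      assume "?T (z * u) = 0 \<and> ?T (z / u) = 0"
      then obtain k m where "z * u = p powi k" "z / u = p powi m"
        using theta_eq_0_iff[OF p] z nz by (metis divide_eq_0_iff mult_eq_0_iff)
      then have "u * u = p powi (k - m)"
        using z nz p by (simp add: power_int_diff field_simps)
      then show False
        by (metis generic(1) theta_eq_0_iff[OF p] mult_eq_0_iff nz(3))
    qed
    have shift_zero: "F (p powi k * w) = 0" if "w \<noteq> 0" "F w = 0" for k w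
      by (rule quasi_periodic_zero_power_int[OF p(2) shift_F _ that]) auto
    consider "?T (z * u) = 0" "?T (z / u) \<noteq> 0" | "?T (z / u) = 0" "?T (z * u) \<noteq> 0"
      using z(2) not_both unfolding D_def P_def by (metis mult_eq_0_iff)
    then show ?thesis
    proof cases
      case 1
      then obtain k where "z * u = p powi k"
        using theta_eq_0_iff[OF p] z nz by auto
      then have "z = p powi k * (1 / u)"
        using nz by (simp add: field_simps)
      then have "F z = 0"
        using shift_zero[OF _ F_inv_u] nz by simp
      moreover have "deriv D z \<noteq> 0"
        using 1 deriv_theta_nonzero[OF p, of "z * u"] deriv_D[OF z(1)] z(1) nz by simp
      ultimately show ?thesis ..
    next
      case 2
      then obtain k where "z / u = p powi k"
        using theta_eq_0_iff[OF p] z nz by auto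
      then have "z = p powi k * u"
        using nz by (simp add: field_simps)
      then have "F z = 0"
        using shift_zero[OF _ F_u] nz by simp
      moreover have "deriv D z \<noteq> 0"
        using 2 deriv_theta_nonzero[OF p, of "z / u"] deriv_D[OF z(1)] z(1) nz by simp
      ultimately show ?thesis ..
    qed
  qed
  have holo: "F holomorphic_on - {0}" "D holomorphic_on - {0}"
    unfolding F_def D_def P_def using p nz by (auto intro!: holomorphic_intros)
  have "1 / z\<^sup>2 \<noteq> 0" if "z \<noteq> 0" for z :: complex
    using that by auto
  then obtain c where c: "\<And>z. z \<noteq> 0 \<Longrightarrow> F z = c * D z"
    using proportional_if_same_quasi_periodicity[OF p holo shift_F shift_D _ zeros] by blast
  have "D y \<noteq> 0"
    using generic(2,3) by (simp add: D_def P_def mult.commute)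
  then have "c = 0"
    using c[OF nz(2)] F_y by simp
  then have "F x = 0"
    using c[OF nz(1)] by simp
  then show ?thesis
    unfolding F_def P_def by (simp add: algebra_simps)
qed

lemma eq_at_if_eq_outside_countable:
  fixes f g :: "complex \<Rightarrow> complex"
  assumes "isCont f z" "isCont g z" "countable X" "\<And>w. w \<notin> X \<Longrightarrow> f w = g w"
  shows "f z = g z"
proof -
  have "z islimpt (- X)"
  proof (unfold islimpt_approachable, intro allI impI)
    fix e :: real assume "e > 0"
    have "countable (insert z X)"
      using assms(3) by simp
    then have "\<not> ball z e \<subseteq> insert z X"
      using uncountable_ball[OF \<open>e > 0\<close>] countable_subset by blast
    then show "\<exists>w\<in>- X. w \<noteq> z \<and> dist w z < e"
      by (auto simp: dist_commute)
  qed
  then have "at z within (- X) \<noteq> bot"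
    by (simp add: trivial_limit_within)
  moreover have "(f \<longlongrightarrow> f z) (at z within (- X))" "(g \<longlongrightarrow> g z) (at z within (- X))"
    using assms(1,2) continuous_at_imp_continuous_at_within continuous_within by blast+
  moreover have "eventually (\<lambda>w. f w = g w) (at z within (- X))"
    using assms(4) by (simp add: eventually_at_filter)
  ultimately show ?thesis
    using tendsto_unique Lim_transform_eventually by blast
qed

lemma theta_addition_formula:
  fixes p x y u v :: complex
  assumes p: "norm p < 1"
    and nz: "x \<noteq> 0" "y \<noteq> 0" "u \<noteq> 0" "v \<noteq> 0"
  shows "theta (x * y) p * theta (x / y) p * theta (u * v) p * theta (u / v) p
       - theta (x * v) p * theta (x / v) p * theta (u * y) p * theta (u / y) p
       = (u / y) * theta (y * v) p * theta (y / v) p * theta (x * u) p * theta (x / u) p"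
proof (cases "p = 0")
  case True
  show ?thesis
    using nz unfolding True theta_0_right by (simp add: divide_simps) algebra
next
  case False
  define L where "L u = theta (x * y) p * theta (x / y) p * theta (u * v) p * theta (u / v) p
       - theta (x * v) p * theta (x / v) p * theta (u * y) p * theta (u / y) p" for u
  define R where "R u = (u / y) * theta (y * v) p * theta (y / v) p * theta (x * u) p * theta (x / u) p" for u
  define Z where "Z = range (\<lambda>k::int. p powi k)"
  define X where "X = insert 0 (\<Union>z\<in>Z. {csqrt z, - csqrt z, z / y, y / z})"
  have zero: "w \<in> Z" if "theta w p = 0" "w \<noteq> 0" for w
    using theta_eq_0_iff[OF p False that(2)] that(1) unfolding Z_def by auto
  have generic_eq: "L w = R w" if "w \<notin> X" for w
  proof -
    have w: "w \<noteq> 0"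
      using that unfolding X_def by blast
    have "w * w \<notin> Z"
    proof
      assume "w * w \<in> Z"
      moreover have "w = csqrt (w * w) \<or> w = - csqrt (w * w)"
        using power2_eq_iff[of w "csqrt (w * w)"] power2_csqrt[of "w * w"] by (simp add: power2_eq_square)
      ultimately show False
        using that unfolding X_def by blast
    qed
    moreover have "y * w \<notin> Z"
    proof
      assume "y * w \<in> Z"
      moreover have "w = y * w / y"
        using nz(2) by simp
      ultimately show False
        using that unfolding X_def by blast
    qed
    moreover have "y / w \<notin> Z"
    proof
      assume "y / w \<in> Z"
      moreover have "w = y / (y / w)"
        using nz(2) w by simp
      ultimately show False
        using that unfolding X_def by blast
    qed
    ultimately have "theta (w * w) p \<noteq> 0" "theta (y * w) p \<noteq> 0" "theta (y / w) p \<noteq> 0"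
      using zero nz w by auto
    then show ?thesis
      unfolding L_def R_def using theta_addition_generic[OF p False nz(1,2) w nz(4)] by simp
  qed
  have "countable X"
    unfolding X_def Z_def by (intro countable_insert countable_UN) auto
  moreover have "isCont H u" if "H holomorphic_on - {0}" for H
    using holomorphic_on_imp_analytic_at[OF that] nz(3) by (simp add: analytic_at_imp_isCont open_Compl)
  moreover have "L holomorphic_on - {0}" "R holomorphic_on - {0}"
    unfolding L_def R_def using p nz by (auto intro!: holomorphic_intros)
  ultimately have "L u = R u"
    using eq_at_if_eq_outside_countable generic_eq by blast
  then show ?thesis
    unfolding L_def R_def .
qed

lemma theta_four_term:
  fixes p a b c d :: complex
  assumes p: "norm p < 1" and nz: "a \<noteq> 0" "b \<noteq> 0" "c \<noteq> 0" "d \<noteq> 0"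
  shows "theta b p * theta c p * theta d p * theta (a\<^sup>2 / (b * c * d)) p
       = theta (a / b) p * theta (a / c) p * theta (a / d) p * theta (b * c * d / a) p
         + b * c * d / a * theta a p * theta (a / (c * d)) p * theta (a / (b * d)) p * theta (a / (b * c)) p"
proof -
  define x where "x = csqrt (b * c)"
  have xx: "x * x = b * c"
    unfolding x_def using power2_csqrt[of "b * c"] by (simp add: power2_eq_square)
  then have x: "x \<noteq> 0"
    using nz by auto
  define y u v where "y = b / x" and "u = a / x" and "v = d * x / a"
  have yuv: "y \<noteq> 0" "u \<noteq> 0" "v \<noteq> 0"
    unfolding y_def u_def v_def using x nz by auto
  have args: "x * y = b" "x / y = c" "u * v = d" "u / v = a\<^sup>2 / (b * c * d)" "x * v = b * c * d / a"
    "x / v = a / d" "u * y = a / c" "u / y = a / b" "y * v = b * d / a" "y / v = a / (c * d)"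
    "x * u = a" "x / u = b * c / a"
    unfolding y_def u_def v_def using x nz xx by (simp_all add: field_simps power2_eq_square)
  have "theta b p * theta c p * theta d p * theta (a\<^sup>2 / (b * c * d)) p
      - theta (b * c * d / a) p * theta (a / d) p * theta (a / c) p * theta (a / b) p
      = a / b * theta (b * d / a) p * theta (a / (c * d)) p * theta a p * theta (b * c / a) p"
    using theta_addition_formula[OF p x yuv(1,2,3)] unfolding args .
  also have "\<dots> = b * c * d / a * theta a p * theta (a / (c * d)) p * theta (a / (b * d)) p
      * theta (a / (b * c)) p"
    using nz by (simp add: theta_divide_swap[OF p, of "b * d" a] theta_divide_swap[OF p, of "b * c" a]
        field_simps)
  finally show ?thesis
    by (simp add: algebra_simps)
qed

lemma theta_telescoping_step:
  fixes p A B C D E F N :: complex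
  assumes p: "norm p < 1"
    and nz: "A \<noteq> 0" "B \<noteq> 0" "C \<noteq> 0" "D \<noteq> 0" "E \<noteq> 0" "F \<noteq> 0" "N \<noteq> 0"
    and bal: "A ^ 3 = B * C * D * E * F * N"
    and nv: "theta (A / B) p \<noteq> 0" "theta (A / C) p \<noteq> 0" "theta (A / D) p \<noteq> 0"
      "theta (E * F * N / A) p \<noteq> 0" "theta (F * N / A) p \<noteq> 0" "theta (E * N / A) p \<noteq> 0"
      "theta (E * F / A) p \<noteq> 0"
  shows "theta A p * theta (A / (E * F)) p * theta (F * N / A) p * theta (E * N / A) p
         / theta (E * F * N / A) p
       * (1 - theta (A / (C * D)) p * theta (A / (B * D)) p * theta (A / (B * C)) p
             / (theta (A / B) p * theta (A / C) p * theta (A / D) p)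
           * (theta E p * theta F p * theta N p
              / (theta (F * N / A) p * theta (E * N / A) p * theta (E * F / A) p)))
     = theta (A / E) p * theta (A / F) p * theta (N / A) p
       + N / A * (theta B p * theta C p * theta D p * theta E p * theta F p * theta N p)
         / (theta (A / B) p * theta (A / C) p * theta (A / D) p)"
proof -
  let ?t = "\<lambda>z. theta z p"
  define X where "X = ?t (A\<^sup>2 / (E * F * N))"
  define Y where "Y = ?t (A / B) * ?t (A / C) * ?t (A / D)"
  define Z where "Z = ?t (A / (C * D)) * ?t (A / (B * D)) * ?t (A / (B * C))"
  define Q where "Q = ?t (E * F * N / A)"
  define S where "S = ?t B * ?t C * ?t D"
  define T where "T = ?t E * ?t F * ?t N"
  have Y: "Y \<noteq> 0" and Q: "Q \<noteq> 0"
    unfolding Y_def Q_def using nv by auto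
  have BCD: "B * C * D / A = A\<^sup>2 / (E * F * N)" "A\<^sup>2 / (B * C * D) = E * F * N / A"
    using bal nz by (simp_all add: field_simps power2_eq_square power3_eq_cube)
  have W1: "S * Q = Y * X + A\<^sup>2 / (E * F * N) * ?t A * Z"
    using theta_four_term[OF p nz(1-4)] unfolding BCD X_def Y_def Z_def Q_def S_def
    by (simp add: ac_simps)
  have W2: "T * X = ?t (A / E) * ?t (A / F) * ?t (A / N) * Q
      + E * F * N / A * ?t A * ?t (A / (F * N)) * ?t (A / (E * N)) * ?t (A / (E * F))"
    using theta_four_term[OF p nz(1,5,6,7)] unfolding X_def Q_def T_def by (simp add: ac_simps)
  have swaps: "?t (N / A) = - (N / A) * ?t (A / N)"
    "?t (F * N / A) = - (F * N / A) * ?t (A / (F * N))"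
    "?t (E * N / A) = - (E * N / A) * ?t (A / (E * N))"
    "?t (A / (E * F)) = - (A / (E * F)) * ?t (E * F / A)"
    using theta_divide_swap[OF p nz(7,1)] theta_divide_swap[OF p, of "F * N" A]
      theta_divide_swap[OF p, of "E * N" A] theta_divide_swap[OF p nz(1), of "E * F"] nz
    by simp_all
  have "?t (A / E) * ?t (A / F) * ?t (N / A) + N / A * (S * T) / Y
    = ?t (A / E) * ?t (A / F) * ?t (N / A) + N / A * T * (S * Q) / (Q * Y)"
    using Q by simp
  also have "\<dots> = ?t (A / E) * ?t (A / F) * ?t (N / A) + N / A * (T * X) / Q
      + N / A * (A\<^sup>2 / (E * F * N)) * ?t A * Z * T / (Q * Y)"
    unfolding W1 using nz Q Y by (simp add: field_simps)
  also have "\<dots> = ?t A * ?t (A / (E * F)) * ?t (F * N / A) * ?t (E * N / A) / Q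
      + A / (E * F) * ?t A * Z * T / (Q * Y)"
    unfolding W2 swaps(1-3) using nz Q by (simp add: field_simps power2_eq_square)
  also have "\<dots> = ?t A * ?t (A / (E * F)) * ?t (F * N / A) * ?t (E * N / A) / Q
      * (1 - Z / Y * (T / (?t (F * N / A) * ?t (E * N / A) * ?t (E * F / A))))"
    unfolding swaps(4) using nz Q Y nv(5-7) by (simp add: field_simps)
  finally show ?thesis
    unfolding X_def Y_def Z_def Q_def S_def T_def by (simp add: ac_simps)
qed

section \<open>Telescoping the sum\<close>

lemma epoch_Suc: "epoch x y p (Suc k) = epoch x y p k * theta (x * y ^ k) p"
  by (simp add: epoch_def)

locale theta_sum =
  fixes p a b c d e f q r s t u v w :: complex and n :: nat
  assumes norm_p: "norm p < 1"
    and nonzero: "a \<noteq> 0" "b \<noteq> 0" "c \<noteq> 0" "d \<noteq> 0" "e \<noteq> 0" "f \<noteq> 0"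
      "q \<noteq> 0" "r \<noteq> 0" "s \<noteq> 0" "t \<noteq> 0" "u \<noteq> 0" "v \<noteq> 0" "w \<noteq> 0"
    and balance: "a ^ 3 * v ^ n = b * c * d * e * f"
    and balance_bases: "w ^ 3 = q * r * s * t * u * v"
begin

definition A :: "nat \<Rightarrow> complex" where "A k = a * w ^ k"
definition B :: "nat \<Rightarrow> complex" where "B k = b * q ^ k"
definition C :: "nat \<Rightarrow> complex" where "C k = c * r ^ k"
definition D :: "nat \<Rightarrow> complex" where "D k = d * s ^ k"
definition E :: "nat \<Rightarrow> complex" where "E k = e * t ^ k"
definition F :: "nat \<Rightarrow> complex" where "F k = f * u ^ k"
definition N :: "nat \<Rightarrow> complex" where "N k = v powi (int k - int n)"

lemma N_eq: "N k = v ^ k / v ^ n"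
  using nonzero by (simp add: N_def power_int_diff)

lemma shifted_nonzero [simp]:
  "A k \<noteq> 0" "B k \<noteq> 0" "C k \<noteq> 0" "D k \<noteq> 0" "E k \<noteq> 0" "F k \<noteq> 0" "N k \<noteq> 0"
  using nonzero by (simp_all add: A_def B_def C_def D_def E_def F_def N_eq)

lemma shifted_balance: "A k ^ 3 = B k * C k * D k * E k * F k * N k"
proof -
  have "A k ^ 3 * v ^ n = a ^ 3 * v ^ n * (w ^ 3) ^ k"
    by (simp add: A_def power_mult_distrib power_mult[symmetric] mult.commute)
  also have "\<dots> = B k * C k * D k * E k * F k * N k * v ^ n"
    using nonzero unfolding balance balance_bases
    by (simp add: B_def C_def D_def E_def F_def N_eq power_mult_distrib)
  finally show ?thesis
    using nonzero by simp
qed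

lemma shifted_Suc:
  "A (Suc k) = A k * w" "E (Suc k) = E k * t" "F (Suc k) = F k * u" "N (Suc k) = N k * v"
  using nonzero by (simp_all add: A_def E_def F_def N_eq)

lemma N_last: "N n = 1"
  by (simp add: N_def)

lemma balance_quotients:
  "a ^ 2 / (b * c * d * e) = f / (a * v ^ n)"
  "a ^ 2 / (b * c * d * f) = e / (a * v ^ n)"
  "a ^ 2 / (b * c * d) = e * f / (a * v ^ n)"
  using nonzero balance[symmetric] by (simp_all add: field_simps power2_eq_square power3_eq_cube)

lemma shifted_arguments:
  "a * w ^ k = A k" "e * t ^ k = E k" "f * u ^ k = F k" "v powi (int k - int n) = N k"
  "a * (w / q) ^ k / b = A k / B k" "a * (w / r) ^ k / c = A k / C k" "a * (w / s) ^ k / d = A k / D k"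
  "a * (w / (r * s)) ^ k / (c * d) = A k / (C k * D k)"
  "a * (w / (q * s)) ^ k / (b * d) = A k / (B k * D k)"
  "a * (w / (q * r)) ^ k / (b * c) = A k / (B k * C k)"
  "a * (w / (t * u)) ^ k / (e * f) = A k / (E k * F k)"
  "f * (u / w) ^ k * N k / a = F k * N k / A k"
  "e * (t / w) ^ k * N k / a = E k * N k / A k"
  "e * f * (t * u / w) ^ k / a = E k * F k / A k"
  using nonzero
  by (simp_all add: A_def B_def C_def D_def E_def F_def N_def power_divide power_mult_distrib field_simps)

lemma shifted_balanced_arguments:
  "a ^ 2 * (u * v / w) ^ k / (b * c * d * e) = F k * N k / A k"
  "a ^ 2 * (t * v / w) ^ k / (b * c * d * f) = E k * N k / A k"
  "a ^ 2 * (t * u * v / w) ^ k / (b * c * d) = E k * F k * N k / A k"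
proof -
  have "a ^ 2 * (u * v / w) ^ k / (b * c * d * e) = f / (a * v ^ n) * (u * v / w) ^ k"
       "a ^ 2 * (t * v / w) ^ k / (b * c * d * f) = e / (a * v ^ n) * (t * v / w) ^ k"
       "a ^ 2 * (t * u * v / w) ^ k / (b * c * d) = e * f / (a * v ^ n) * (t * u * v / w) ^ k"
    by (metis balance_quotients times_divide_eq_left)+
  then show "a ^ 2 * (u * v / w) ^ k / (b * c * d * e) = F k * N k / A k"
       "a ^ 2 * (t * v / w) ^ k / (b * c * d * f) = E k * N k / A k"
       "a ^ 2 * (t * u * v / w) ^ k / (b * c * d) = E k * F k * N k / A k"
    using nonzero by (simp_all add: A_def E_def F_def N_eq power_divide power_mult_distrib field_simps)
qed

definition ratio :: "nat \<Rightarrow> complex" where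
  "ratio k = (epoch b q p k * epoch c r p k * epoch d s p k * epoch e t p k * epoch f u p k
        * epoch (inverse (v ^ n)) v p k)
      / (epoch (a / b) (w / q) p k * epoch (a / c) (w / r) p k * epoch (a / d) (w / s) p k
        * epoch (a * w / (e * t)) (w / t) p k * epoch (a * w / (f * u)) (w / u) p k
        * epoch (a * w * (v powi (int n - 1))) (w / v) p k)"

lemma epoch_arguments:
  "b * q ^ k = B k" "c * r ^ k = C k" "d * s ^ k = D k" "inverse (v ^ n) * v ^ k = N k"
  "a / b * (w / q) ^ k = A k / B k" "a / c * (w / r) ^ k = A k / C k" "a / d * (w / s) ^ k = A k / D k"
  "a * w / (e * t) * (w / t) ^ k = A k * w / (E k * t)"
  "a * w / (f * u) * (w / u) ^ k = A k * w / (F k * u)"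
  "a * w * v powi (int n - 1) * (w / v) ^ k = A k * w / (v * N k)"
  using nonzero by (simp_all add: A_def B_def C_def D_def E_def F_def N_eq power_divide
      power_int_diff field_simps)

lemma ratio_Suc:
  "ratio (Suc k) = ratio k
     * (theta (B k) p * theta (C k) p * theta (D k) p * theta (E k) p * theta (F k) p * theta (N k) p)
     / (theta (A k / B k) p * theta (A k / C k) p * theta (A k / D k) p
        * theta (A k * w / (E k * t)) p * theta (A k * w / (F k * u)) p * theta (A k * w / (v * N k)) p)"
  unfolding ratio_def epoch_Suc epoch_arguments shifted_arguments(2,3)
  by (simp add: divide_inverse inverse_mult_distrib mult_ac)

definition prefactor :: complex where
  "prefactor = theta (a ^ 2 / (b * c * d)) p
     / (theta a p * theta (a / (e * f)) p * theta (a ^ 2 / (b * c * d * e)) p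
        * theta (a ^ 2 / (b * c * d * f)) p)"

definition telescoper :: "nat \<Rightarrow> complex" where
  "telescoper k = prefactor * ratio k * (w / v) ^ k
     * (theta (A k / E k) p * theta (A k / F k) p * theta (N k / A k) p)"

lemma telescoper_0:
  "telescoper 0 = (theta (a / e) p * theta (a / f) p * theta (inverse (v ^ n) / a) p
        * theta (e * f * inverse (v ^ n) / a) p)
      / (theta (e * inverse (v ^ n) / a) p * theta (f * inverse (v ^ n) / a) p
        * theta a p * theta (a / (e * f)) p)"
  unfolding telescoper_def prefactor_def ratio_def balance_quotients
  by (simp add: A_def E_def F_def N_def epoch_def power_int_minus divide_inverse inverse_mult_distrib mult_ac)

lemma telescoper_Suc_last: "telescoper (Suc n) = 0"
  by (simp add: telescoper_def ratio_def epoch_Suc theta_1[OF norm_p] nonzero)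

lemma telescoper_Suc:
  assumes "theta (A k * w / (E k * t)) p \<noteq> 0" "theta (A k * w / (F k * u)) p \<noteq> 0"
    "theta (A k * w / (v * N k)) p \<noteq> 0"
  shows "telescoper (Suc k) = - prefactor * ratio k * (w / v) ^ k
     * (N k / A k * (theta (B k) p * theta (C k) p * theta (D k) p * theta (E k) p * theta (F k) p
         * theta (N k) p) / (theta (A k / B k) p * theta (A k / C k) p * theta (A k / D k) p))"
proof -
  have swap: "theta (N k * v / (A k * w)) p = - (N k * v / (A k * w)) * theta (A k * w / (v * N k)) p"
    using theta_divide_swap[OF norm_p, of "N k * v" "A k * w"] nonzero by (simp add: mult.commute)
  show ?thesis
    unfolding telescoper_def ratio_Suc shifted_Suc swap using assms nonzero
    by (simp add: field_simps)
qed

definition summand :: "nat \<Rightarrow> complex" where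
  "summand k =
      (theta (a * w ^ k) p * theta (a * (w / (t * u)) ^ k / (e * f)) p
        * theta (a ^ 2 * (u * v / w) ^ k / (b * c * d * e)) p
        * theta (a ^ 2 * (t * v / w) ^ k / (b * c * d * f)) p
        * theta (a ^ 2 / (b * c * d)) p)
      / (theta a p * theta (a / (e * f)) p * theta (a ^ 2 / (b * c * d * e)) p
        * theta (a ^ 2 / (b * c * d * f)) p * theta (a ^ 2 * (t * u * v / w) ^ k / (b * c * d)) p)
    * ((epoch b q p k * epoch c r p k * epoch d s p k * epoch e t p k * epoch f u p k
        * epoch (inverse (v ^ n)) v p k)
      / (epoch (a / b) (w / q) p k * epoch (a / c) (w / r) p k * epoch (a / d) (w / s) p k
        * epoch (a * w / (e * t)) (w / t) p k * epoch (a * w / (f * u)) (w / u) p k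
        * epoch (a * w * (v powi (int n - 1))) (w / v) p k))
    * (w / v) ^ k
    * (1 - (theta (a * (w / (r * s)) ^ k / (c * d)) p * theta (a * (w / (q * s)) ^ k / (b * d)) p
            * theta (a * (w / (q * r)) ^ k / (b * c)) p)
          / (theta (a * (w / q) ^ k / b) p * theta (a * (w / r) ^ k / c) p
            * theta (a * (w / s) ^ k / d) p)
        * ((theta (e * t ^ k) p * theta (f * u ^ k) p * theta (v powi (int k - int n)) p)
          / (theta (f * (u / w) ^ k * (v powi (int k - int n)) / a) p
            * theta (e * (t / w) ^ k * (v powi (int k - int n)) / a) p
            * theta (e * f * (t * u / w) ^ k / a) p)))"

lemma summand_eq:
  "summand k = prefactor * ratio k * (w / v) ^ k
     * (theta (A k) p * theta (A k / (E k * F k)) p * theta (F k * N k / A k) p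
          * theta (E k * N k / A k) p / theta (E k * F k * N k / A k) p
        * (1 - theta (A k / (C k * D k)) p * theta (A k / (B k * D k)) p * theta (A k / (B k * C k)) p
             / (theta (A k / B k) p * theta (A k / C k) p * theta (A k / D k) p)
           * (theta (E k) p * theta (F k) p * theta (N k) p
              / (theta (F k * N k / A k) p * theta (E k * N k / A k) p * theta (E k * F k / A k) p))))"
  unfolding summand_def shifted_arguments shifted_balanced_arguments ratio_def[symmetric]
  by (simp add: prefactor_def divide_inverse inverse_mult_distrib mult_ac)

lemma summand_eq_telescoper_diff:
  assumes k: "k \<le> n"
    and wd1: "\<forall>k\<le>n. theta a p * theta (a / (e * f)) p * theta (a ^ 2 / (b * c * d * e)) p
                 * theta (a ^ 2 / (b * c * d * f)) p * theta (a ^ 2 * (t * u * v / w) ^ k / (b * c * d)) p \<noteq> 0"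
    and wd2: "\<forall>k\<le>n. epoch (a / b) (w / q) p k * epoch (a / c) (w / r) p k * epoch (a / d) (w / s) p k
                 * epoch (a * w / (e * t)) (w / t) p k * epoch (a * w / (f * u)) (w / u) p k
                 * epoch (a * w * (v powi (int n - 1))) (w / v) p k \<noteq> 0"
    and wd3: "\<forall>k\<le>n. theta (a * (w / q) ^ k / b) p * theta (a * (w / r) ^ k / c) p
                 * theta (a * (w / s) ^ k / d) p \<noteq> 0"
    and wd4: "\<forall>k\<le>n. theta (f * (u / w) ^ k * (v powi (int k - int n)) / a) p
                 * theta (e * (t / w) ^ k * (v powi (int k - int n)) / a) p
                 * theta (e * f * (t * u / w) ^ k / a) p \<noteq> 0"
  shows "summand k = telescoper k - telescoper (Suc k)"
proof -
  let ?Y = "theta (A k / B k) p * theta (A k / C k) p * theta (A k / D k) p"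
  let ?\<Theta> = "theta (B k) p * theta (C k) p * theta (D k) p * theta (E k) p * theta (F k) p * theta (N k) p"
  have nv: "theta (A k / B k) p \<noteq> 0" "theta (A k / C k) p \<noteq> 0" "theta (A k / D k) p \<noteq> 0"
    "theta (E k * F k * N k / A k) p \<noteq> 0" "theta (F k * N k / A k) p \<noteq> 0"
    "theta (E k * N k / A k) p \<noteq> 0" "theta (E k * F k / A k) p \<noteq> 0"
    using wd1[rule_format, OF k] wd3[rule_format, OF k] wd4[rule_format, OF k]
    unfolding shifted_arguments shifted_balanced_arguments by auto
  have next_term: "telescoper (Suc k) = - prefactor * ratio k * (w / v) ^ k * (N k / A k * ?\<Theta> / ?Y)"
  proof (cases "k = n")
    case True
    then show ?thesis
      by (simp add: telescoper_Suc_last N_last theta_1[OF norm_p])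
  next
    case False
    then have "theta (A k * w / (E k * t)) p \<noteq> 0" "theta (A k * w / (F k * u)) p \<noteq> 0"
      "theta (A k * w / (v * N k)) p \<noteq> 0"
      using k wd2[rule_format, of "Suc k"] unfolding epoch_Suc epoch_arguments by auto
    then show ?thesis
      by (rule telescoper_Suc)
  qed
  have "summand k = prefactor * ratio k * (w / v) ^ k
      * (theta (A k / E k) p * theta (A k / F k) p * theta (N k / A k) p + N k / A k * ?\<Theta> / ?Y)"
    unfolding summand_eq theta_telescoping_step[OF norm_p shifted_nonzero shifted_balance nv] ..
  also have "\<dots> = telescoper k - telescoper (Suc k)"
    unfolding next_term by (simp add: telescoper_def[of k] algebra_simps)
  finally show ?thesis .
qed

end

theorem mainTheorem6:
  fixes p a b c d e f q r s t u v w :: complex and n :: nat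
  assumes hp: "norm p < 1"
    and nz: "a \<noteq> 0" "b \<noteq> 0" "c \<noteq> 0" "d \<noteq> 0" "e \<noteq> 0" "f \<noteq> 0"
            "q \<noteq> 0" "r \<noteq> 0" "s \<noteq> 0" "t \<noteq> 0" "u \<noteq> 0" "v \<noteq> 0" "w \<noteq> 0"
    and bal1: "a ^ 3 * v ^ n = b * c * d * e * f"
    and bal2: "w ^ 3 = q * r * s * t * u * v"
    and wd1: "\<forall>k\<le>n. theta a p * theta (a / (e * f)) p * theta (a ^ 2 / (b * c * d * e)) p
                 * theta (a ^ 2 / (b * c * d * f)) p * theta (a ^ 2 * (t * u * v / w) ^ k / (b * c * d)) p \<noteq> 0"
    and wd2: "\<forall>k\<le>n. epoch (a / b) (w / q) p k * epoch (a / c) (w / r) p k * epoch (a / d) (w / s) p k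
                 * epoch (a * w / (e * t)) (w / t) p k * epoch (a * w / (f * u)) (w / u) p k
                 * epoch (a * w * (v powi (int n - 1))) (w / v) p k \<noteq> 0"
    and wd3: "\<forall>k\<le>n. theta (a * (w / q) ^ k / b) p * theta (a * (w / r) ^ k / c) p
                 * theta (a * (w / s) ^ k / d) p \<noteq> 0"
    and wd4: "\<forall>k\<le>n. theta (f * (u / w) ^ k * (v powi (int k - int n)) / a) p
                 * theta (e * (t / w) ^ k * (v powi (int k - int n)) / a) p
                 * theta (e * f * (t * u / w) ^ k / a) p \<noteq> 0"
    and wd5: "theta (e * inverse (v ^ n) / a) p * theta (f * inverse (v ^ n) / a) p
                 * theta a p * theta (a / (e * f)) p \<noteq> 0"
  shows "(\<Sum>k\<le>n.
      (theta (a * w ^ k) p * theta (a * (w / (t * u)) ^ k / (e * f)) p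
        * theta (a ^ 2 * (u * v / w) ^ k / (b * c * d * e)) p
        * theta (a ^ 2 * (t * v / w) ^ k / (b * c * d * f)) p
        * theta (a ^ 2 / (b * c * d)) p)
      / (theta a p * theta (a / (e * f)) p * theta (a ^ 2 / (b * c * d * e)) p
        * theta (a ^ 2 / (b * c * d * f)) p * theta (a ^ 2 * (t * u * v / w) ^ k / (b * c * d)) p)
    * ((epoch b q p k * epoch c r p k * epoch d s p k * epoch e t p k * epoch f u p k
        * epoch (inverse (v ^ n)) v p k)
      / (epoch (a / b) (w / q) p k * epoch (a / c) (w / r) p k * epoch (a / d) (w / s) p k
        * epoch (a * w / (e * t)) (w / t) p k * epoch (a * w / (f * u)) (w / u) p k
        * epoch (a * w * (v powi (int n - 1))) (w / v) p k))
    * (w / v) ^ k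
    * (1 - (theta (a * (w / (r * s)) ^ k / (c * d)) p * theta (a * (w / (q * s)) ^ k / (b * d)) p
            * theta (a * (w / (q * r)) ^ k / (b * c)) p)
          / (theta (a * (w / q) ^ k / b) p * theta (a * (w / r) ^ k / c) p
            * theta (a * (w / s) ^ k / d) p)
        * ((theta (e * t ^ k) p * theta (f * u ^ k) p * theta (v powi (int k - int n)) p)
          / (theta (f * (u / w) ^ k * (v powi (int k - int n)) / a) p
            * theta (e * (t / w) ^ k * (v powi (int k - int n)) / a) p
            * theta (e * f * (t * u / w) ^ k / a) p))))
    = (theta (a / e) p * theta (a / f) p * theta (inverse (v ^ n) / a) p
        * theta (e * f * inverse (v ^ n) / a) p)
      / (theta (e * inverse (v ^ n) / a) p * theta (f * inverse (v ^ n) / a) p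
        * theta a p * theta (a / (e * f)) p)"
proof -
  interpret theta_sum p a b c d e f q r s t u v w n
    using hp nz bal1 bal2 by unfold_locales
  have "summand k = telescoper k - telescoper (Suc k)" if "k \<le> n" for k
    using summand_eq_telescoper_diff[OF that wd1 wd2 wd3 wd4] .
  then have "(\<Sum>k\<le>n. summand k) = telescoper 0"
    by (simp add: sum_telescope telescoper_Suc_last)
  then show ?thesis
    unfolding summand_def telescoper_0 .
qed

end
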